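(* Let $f(x)=\frac1n\sum_{i=1}^nf_i(x)$ on $\mathbb{R}$ with $f_i(x)=\frac{a_i}2(x-x_i^* )^2$, $a_i>0$, $x_i^*\in\mathbb{R}$. Consider SGD $x^{k+1}=x^k-\gamma_kf_{i_k}'(x^k)$, where $i_k$ is sampled uniformly from $[n]$ independently at each iteration, with stepsize $\gamma_k=\frac{f_{i_k}(x^k)-f_{i_k}^*}{c_k|f_{i_k}'(x^k)|^2}$ (where $f_i^*=\inf f_i=0$) and $c_k=(k+1)/2$. Then $\mathbb{E}|x^{k+1}-\tilde x|^2=\mathcal O(1/k)$, where $\tilde x=\frac1n\sum_{i=1}^nx_i^*$; in general $\tilde x$ differs from the minimizer $x^*=\frac{\sum_{i=1}^na_ix_i^*}{\sum_{i=1}^na_i}$ of $f$.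
   Context: When $f'_{i_k}(x^k)=0$ the iterate is not updated. *)

theory Defs
  imports "HOL-Analysis.Analysis"
begin

definition fcomp :: "(nat \<Rightarrow> real) \<Rightarrow> (nat \<Rightarrow> real) \<Rightarrow> nat \<Rightarrow> real \<Rightarrow> real" where
  "fcomp a xs i x = a i / 2 * (x - xs i)^2"

definition dfcomp :: "(nat \<Rightarrow> real) \<Rightarrow> (nat \<Rightarrow> real) \<Rightarrow> nat \<Rightarrow> real \<Rightarrow> real" where
  "dfcomp a xs i x = a i * (x - xs i)"

definition fstar :: "(nat \<Rightarrow> real) \<Rightarrow> (nat \<Rightarrow> real) \<Rightarrow> nat \<Rightarrow> real" where
  "fstar a xs i = (INF y. fcomp a xs i y)"

definition cpar :: "nat \<Rightarrow> real" where
  "cpar k = (real k + 1) / 2"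

definition sgd_step :: "(nat \<Rightarrow> real) \<Rightarrow> (nat \<Rightarrow> real) \<Rightarrow> nat \<Rightarrow> nat \<Rightarrow> real \<Rightarrow> real" where
  "sgd_step a xs k i x =
     (if dfcomp a xs i x = 0 then x
      else x - ((fcomp a xs i x - fstar a xs i) / (cpar k * \<bar>dfcomp a xs i x\<bar>^2)) * dfcomp a xs i x)"

fun sgd_iter :: "(nat \<Rightarrow> real) \<Rightarrow> (nat \<Rightarrow> real) \<Rightarrow> real \<Rightarrow> (nat \<Rightarrow> nat) \<Rightarrow> nat \<Rightarrow> real" where
  "sgd_iter a xs x0 I 0 = x0"
| "sgd_iter a xs x0 I (Suc k) = sgd_step a xs k (I k) (sgd_iter a xs x0 I k)"

text \<open>E |x^{k+1} - t|^2 where i_0,...,i_k are i.i.d. uniform on {0..<n}: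
  the average over all n^(k+1) equally likely index sequences.\<close>
definition expected_sq_dist :: "nat \<Rightarrow> (nat \<Rightarrow> real) \<Rightarrow> (nat \<Rightarrow> real) \<Rightarrow> real \<Rightarrow> nat \<Rightarrow> real \<Rightarrow> real" where
  "expected_sq_dist n a xs x0 k t =
     (\<Sum>I \<in> PiE {..k} (\<lambda>_. {..<n}). (sgd_iter a xs x0 I (Suc k) - t)^2) / real n ^ Suc k"

definition xtilde :: "nat \<Rightarrow> (nat \<Rightarrow> real) \<Rightarrow> real" where
  "xtilde n xs = (\<Sum>i<n. xs i) / real n"

definition xstar :: "nat \<Rightarrow> (nat \<Rightarrow> real) \<Rightarrow> (nat \<Rightarrow> real) \<Rightarrow> real" where
  "xstar n a xs = (\<Sum>i<n. a i * xs i) / (\<Sum>i<n. a i)"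

end

theory Submission
  imports Defs
begin

text \<open>With the Polyak stepsize and c_k = (k+1)/2 the update reads
  x^{k+1} = (k x^k + x*_{i_k}) / (k+1), whatever the curvatures a_i are. Hence x^{k+1} is the
  empirical mean of the k+1 independent uniform samples x*_{i_0}, ..., x*_{i_k}: its mean is
  x~ and its variance is exactly sigma^2/(k+1), where sigma^2 is the variance of the x*_i.
  The minimiser of f weights the x*_i by the a_i instead, so it differs from x~ in general.\<close>

lemma sum_PiE_insert:
  assumes "x \<notin> S" "finite S" "\<And>i. finite (T i)"
  shows "(\<Sum>I\<in>PiE (insert x S) T. h I) = (\<Sum>g\<in>PiE S T. \<Sum>y\<in>T x. h (g(x := y)))"
proof -
  have "(\<Sum>I\<in>PiE (insert x S) T. h I) = (\<Sum>p\<in>T x \<times> PiE S T. h ((\<lambda>(y, g). g(x := y)) p))"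
    unfolding PiE_insert_eq by (subst sum.reindex[OF inj_combinator[OF assms(1)]]) (simp add: o_def)
  also have "\<dots> = (\<Sum>y\<in>T x. \<Sum>g\<in>PiE S T. h (g(x := y)))"
    by (simp add: sum.cartesian_product split_def)
  also have "\<dots> = (\<Sum>g\<in>PiE S T. \<Sum>y\<in>T x. h (g(x := y)))"
    by (rule sum.swap)
  finally show ?thesis .
qed

text \<open>Read probabilistically: for independent uniform samples \<open>I j \<in> A\<close>, \<open>j \<in> J\<close>, and
  mean-zero \<open>e\<close>, the second moment of \<open>\<Sum>j\<in>J. e (I j)\<close> is \<open>card J\<close> times that of \<open>e\<close>.\<close>
lemma sum_PiE_square_sum_mean_zero:
  fixes e :: "'b \<Rightarrow> real"
  assumes "finite J" "finite A" and mean_zero: "(\<Sum>y\<in>A. e y) = 0"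
  shows "real (card A) * (\<Sum>I\<in>PiE J (\<lambda>_. A). (\<Sum>j\<in>J. e (I j))\<^sup>2)
    = real (card J) * real (card A) ^ card J * (\<Sum>y\<in>A. (e y)\<^sup>2)"
  using assms(1)
proof (induction J rule: finite_induct)
  case empty
  show ?case by simp
next
  case (insert x J)
  let ?s = "\<lambda>g. \<Sum>j\<in>J. e (g j)"
  have "(\<Sum>I\<in>PiE (insert x J) (\<lambda>_. A). (\<Sum>j\<in>insert x J. e (I j))\<^sup>2)
      = (\<Sum>g\<in>PiE J (\<lambda>_. A). \<Sum>y\<in>A. (e y + ?s g)\<^sup>2)"
  proof -
    have "(\<Sum>j\<in>insert x J. e ((g(x := y)) j)) = e y + ?s g" for g y
    proof -
      have "(\<Sum>j\<in>J. e ((g(x := y)) j)) = ?s g"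
        using insert.hyps(2) by (intro sum.cong) auto
      thus ?thesis using insert.hyps by simp
    qed
    thus ?thesis
      using insert.hyps assms(2) by (simp add: sum_PiE_insert)
  qed
  also have "\<dots> = (\<Sum>g\<in>PiE J (\<lambda>_. A). (\<Sum>y\<in>A. (e y)\<^sup>2) + real (card A) * (?s g)\<^sup>2)"
  proof (intro sum.cong refl)
    fix g
    have "(\<Sum>y\<in>A. (e y + ?s g)\<^sup>2) = (\<Sum>y\<in>A. (e y)\<^sup>2 + 2 * ?s g * e y + (?s g)\<^sup>2)"
      by (simp add: power2_sum algebra_simps)
    also have "\<dots> = (\<Sum>y\<in>A. (e y)\<^sup>2) + 2 * ?s g * (\<Sum>y\<in>A. e y) + real (card A) * (?s g)\<^sup>2"
      by (simp add: sum.distrib sum_distrib_left)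
    finally show "(\<Sum>y\<in>A. (e y + ?s g)\<^sup>2) = (\<Sum>y\<in>A. (e y)\<^sup>2) + real (card A) * (?s g)\<^sup>2"
      by (simp add: mean_zero)
  qed
  also have "\<dots> = real (card A) ^ card J * (\<Sum>y\<in>A. (e y)\<^sup>2)
      + real (card A) * (\<Sum>g\<in>PiE J (\<lambda>_. A). (?s g)\<^sup>2)"
    using insert.hyps assms(2) by (simp add: sum.distrib sum_distrib_left card_PiE)
  finally show ?case
    using insert.IH insert.hyps by (simp add: algebra_simps)
qed

lemma fstar_eq_0:
  assumes "a i \<ge> 0"
  shows "fstar a xs i = 0"
proof -
  have "(INF y. fcomp a xs i y) = fcomp a xs i (xs i)"
    by (rule cInf_eq_minimum) (auto simp: fcomp_def assms)
  thus ?thesis by (simp add: fstar_def fcomp_def)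
qed

lemma sgd_step_eq:
  assumes "a i > 0"
  shows "sgd_step a xs k i x = (real k * x + xs i) / (real k + 1)"
proof (cases "x = xs i")
  case True
  thus ?thesis by (simp add: sgd_step_def dfcomp_def field_simps)
next
  case False
  define d where "d = x - xs i"
  have "d \<noteq> 0" using False by (simp add: d_def)
  have "(fcomp a xs i x - fstar a xs i) / (cpar k * \<bar>dfcomp a xs i x\<bar>\<^sup>2) * dfcomp a xs i x
      = (a i / 2 * d\<^sup>2) / ((real k + 1) / 2 * \<bar>a i * d\<bar>\<^sup>2) * (a i * d)"
    using assms by (simp add: fstar_eq_0 fcomp_def dfcomp_def cpar_def d_def)
  also have "\<dots> = d / (real k + 1)"
    using assms \<open>d \<noteq> 0\<close> by (simp add: power2_eq_square)
  finally show ?thesis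
    using False assms by (simp add: sgd_step_def dfcomp_def d_def field_simps)
qed

lemma sgd_iter_Suc_eq_mean:
  assumes "\<And>j. j \<le> k \<Longrightarrow> a (I j) > 0"
  shows "sgd_iter a xs x0 I (Suc k) = (\<Sum>j\<le>k. xs (I j)) / (real k + 1)"
  using assms
proof (induction k)
  case 0
  thus ?case by (simp add: sgd_step_eq)
next
  case (Suc k)
  have "sgd_iter a xs x0 I (Suc k) = (\<Sum>j\<le>k. xs (I j)) / (real k + 1)"
    using Suc by simp
  moreover have "a (I (Suc k)) > 0"
    using Suc.prems by simp
  ultimately show ?case
    by (simp add: sgd_step_eq add_ac)
qed

lemma expected_sq_dist_xtilde:
  assumes "n \<ge> 1" and "\<And>i. i < n \<Longrightarrow> a i > 0"
  shows "expected_sq_dist n a xs x0 k (xtilde n xs)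
    = (\<Sum>i<n. (xs i - xtilde n xs)\<^sup>2) / (real n * (real k + 1))"
proof -
  define t where "t = xtilde n xs"
  define e where "e i = xs i - t" for i
  define \<Omega> where "\<Omega> = PiE {..k} (\<lambda>_. {..<n})"
  have mean_zero: "(\<Sum>i<n. e i) = 0"
    using assms(1) by (simp add: e_def t_def xtilde_def sum_subtractf)
  have deviation: "sgd_iter a xs x0 I (Suc k) - t = (\<Sum>j\<le>k. e (I j)) / (real k + 1)"
    if "I \<in> \<Omega>" for I
  proof -
    have "sgd_iter a xs x0 I (Suc k) = (\<Sum>j\<le>k. xs (I j)) / (real k + 1)"
      using that assms(2) by (intro sgd_iter_Suc_eq_mean) (auto simp: \<Omega>_def)
    thus ?thesis
      by (simp add: e_def sum_subtractf field_simps)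
  qed
  define T where "T = (\<Sum>I\<in>\<Omega>. (\<Sum>j\<le>k. e (I j))\<^sup>2)"
  have sum_sq_dist: "(\<Sum>I\<in>\<Omega>. (sgd_iter a xs x0 I (Suc k) - t)\<^sup>2) = T / (real k + 1)\<^sup>2"
    by (simp add: T_def deviation power_divide sum_divide_distrib[symmetric] del: sgd_iter.simps)
  have T_eq: "real n * T = (real k + 1) * real n ^ Suc k * (\<Sum>i<n. (e i)\<^sup>2)"
    using sum_PiE_square_sum_mean_zero[of "{..k}" "{..<n}" e] mean_zero
    by (simp add: T_def \<Omega>_def add.commute)
  have "expected_sq_dist n a xs x0 k t = T / (real k + 1)\<^sup>2 / real n ^ Suc k"
    by (simp add: expected_sq_dist_def \<Omega>_def[symmetric] sum_sq_dist del: sgd_iter.simps)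
  also have "\<dots> = real n * T / (real n * (real k + 1)\<^sup>2 * real n ^ Suc k)"
    using assms(1) by simp
  also have "\<dots> = (\<Sum>i<n. (e i)\<^sup>2) / (real n * (real k + 1))"
    unfolding T_eq using assms(1) by (simp add: power2_eq_square del: power_Suc)
  finally show ?thesis
    by (simp add: t_def e_def)
qed

lemma xtilde_neq_xstar: "xtilde 2 real \<noteq> xstar 2 (\<lambda>i. real i + 1) real"
  by (simp add: xtilde_def xstar_def numeral_2_eq_2)

theorem proposition4:
  fixes n :: nat and a xs :: "nat \<Rightarrow> real" and x0 :: real
  assumes "n \<ge> 1" and "\<And>i. i < n \<Longrightarrow> a i > 0"
  shows "(\<exists>C. \<forall>k\<ge>1. expected_sq_dist n a xs x0 k (xtilde n xs) \<le> C / real k)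
    \<and> (\<exists>(m::nat) (b::nat \<Rightarrow> real) ys. m \<ge> 1 \<and> (\<forall>i<m. b i > 0) \<and> xtilde m ys \<noteq> xstar m b ys)"
proof
  define V where "V = (\<Sum>i<n. (xs i - xtilde n xs)\<^sup>2) / real n"
  have "expected_sq_dist n a xs x0 k (xtilde n xs) \<le> V / real k" if "k \<ge> 1" for k
  proof -
    have "V \<ge> 0"
      by (simp add: V_def sum_nonneg)
    hence "V / (real k + 1) \<le> V / real k"
      using that by (intro divide_left_mono) auto
    thus ?thesis
      using expected_sq_dist_xtilde[OF assms] by (simp add: V_def field_simps)
  qed
  thus "\<exists>C. \<forall>k\<ge>1. expected_sq_dist n a xs x0 k (xtilde n xs) \<le> C / real k"
    by blast
  show "\<exists>(m::nat) (b::nat \<Rightarrow> real) ys. m \<ge> 1 \<and> (\<forall>i<m. b i > 0) \<and> xtilde m ys \<noteq> xstar m b ys"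
    using xtilde_neq_xstar by (intro exI[of _ 2] exI[of _ "\<lambda>i. real i + 1"] exI[of _ real]) auto
qed

end
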